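(* Let $\theta_1,\theta_2>0$, $\theta=\theta_1+\theta_2$, $p=\theta_1/\theta$, and let $\{\xi(t)\}_{t\ge0}$ be the Fleming–Viot process on $[0,1]$ with generator \[ \mathcal{L}g(x)=x\big(g(1)-g(x)\big)+(1-x)\big(g(0)-g(x)\big)+\tfrac12(\theta_1-\theta x)g'(x). \] Writing $\mathbb{E}_x$ for expectation given $\xi(0)=x$, for $n=0,1,\ldots$ \begin{align*} \mathbb{E}_x\big[(\xi(t)-p)^n\big]&=e^{-t(1+n\theta/2)}(x-p)^n\\ &\quad+\frac{2/\theta}{n+2/\theta}\Big[p(1-p)^n+(-1)^n(1-p)p^n\Big]\Big[1-e^{-t(1+n\theta/2)}\Big]\\ &\quad+\frac{(x-p)e^{-\theta t/2}(2/\theta)}{n-1+2/\theta}\Big[(1-p)^n-(-1)^np^n\Big]\Big[1-e^{-t(1+(n-1)\theta/2)}\Big]. \end{align*}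
   Context: $\{\xi(t)\}$ is the two-type star-shaped $\Lambda$-Fleming–Viot process with mutation: at rate 1 the whole population is replaced by the offspring of a single randomly chosen individual, and mutation occurs along lines at rate $\theta/2$ with new type 1 with probability $p$; $\xi(t)$ is the frequency of type 1. *)

theory Defs
  imports "HOL-Probability.Probability"
begin

text \<open>Pathwise construction of the two-type star-shaped Fleming-Viot process with
generator  L g(x) = x (g 1 - g x) + (1 - x)(g 0 - g x) + 1/2 (theta1 - theta x) g'(x).
It is a piecewise-deterministic Markov process: between jumps it follows the flow
y' = (theta1 - theta y)/2, i.e. y(s) = p + (y0 - p) exp(-theta s/2); at rate 1 it jumps
to 1 with probability equal to the current state and to 0 otherwise.
The randomness is an i.i.d. sequence of pairs (E_k, U_k) with E_k ~ Exp(1) (holding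
times) and U_k ~ Uniform[0,1] (marks deciding the jump target).\<close>

definition fv_flow :: "real \<Rightarrow> real \<Rightarrow> real \<Rightarrow> real \<Rightarrow> real" where
  "fv_flow \<theta> p s y = p + (y - p) * exp (- (\<theta> / 2) * s)"

fun fv_jump_time :: "(nat \<Rightarrow> real \<times> real) \<Rightarrow> nat \<Rightarrow> real" where
  "fv_jump_time \<omega> 0 = 0"
| "fv_jump_time \<omega> (Suc k) = fv_jump_time \<omega> k + fst (\<omega> k)"

fun fv_state :: "real \<Rightarrow> real \<Rightarrow> real \<Rightarrow> (nat \<Rightarrow> real \<times> real) \<Rightarrow> nat \<Rightarrow> real" where
  "fv_state \<theta> p x \<omega> 0 = x"
| "fv_state \<theta> p x \<omega> (Suc k) =
     (if snd (\<omega> k) < fv_flow \<theta> p (fst (\<omega> k)) (fv_state \<theta> p x \<omega> k) then 1 else 0)"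

definition fv_xi :: "real \<Rightarrow> real \<Rightarrow> real \<Rightarrow> (nat \<Rightarrow> real \<times> real) \<Rightarrow> real \<Rightarrow> real" where
  "fv_xi \<theta>\<^sub>1 \<theta>\<^sub>2 x \<omega> t =
     (let \<theta> = \<theta>\<^sub>1 + \<theta>\<^sub>2; p = \<theta>\<^sub>1 / \<theta>;
          k = (LEAST k. t < fv_jump_time \<omega> (Suc k))
      in fv_flow \<theta> p (t - fv_jump_time \<omega> k) (fv_state \<theta> p x \<omega> k))"

definition fv_space :: "(nat \<Rightarrow> real \<times> real) measure" where
  "fv_space = (\<Pi>\<^sub>M i\<in>UNIV. (density lborel (exponential_density 1)
                             \<Otimes>\<^sub>M uniform_measure lborel {0..1}))"

end

theory Submission
  imports Defs "HOL-Real_Asymp.Real_Asymp"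
begin

(*
  Write m(x, t) for the centred moment E_x (xi(t) - p)^n and phi_s(x) = p + (x - p) e^(-theta s/2)
  for the deterministic flow. Conditioning on the first holding time E ~ Exp(1) and on the first
  jump target (1 with probability phi_E(x), else 0) gives the renewal equation
    m(x, t) = e^(-t) (phi_t(x) - p)^n
              + E [1{E <= t} (phi_E(x) m(1, t - E) + (1 - phi_E(x)) m(0, t - E))].
  The closed form F solves the same equation: the integrand only involves
  p F(1, r) + (1 - p) F(0, r) and F(1, r) - F(0, r), which are combinations of exponentials, so
  the integral has an explicit antiderivative. Bounded solutions are unique: on {0, 1} x [0, T]
  the difference of two solutions is bounded by P(E <= T) = 1 - e^(-T) times its own supremum,
  hence vanishes. Evaluating the renewal equation once more yields m(x, t) = F(x, t) for every x.
*)

lemma (in sequence_space) nn_integral_case_nat: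
  assumes [measurable]: "f \<in> borel_measurable S"
  shows "(\<integral>\<^sup>+\<omega>. f \<omega> \<partial>S) = (\<integral>\<^sup>+s. \<integral>\<^sup>+\<omega>. f (case_nat s \<omega>) \<partial>S \<partial>M)"
proof -
  have "(\<integral>\<^sup>+\<omega>. f \<omega> \<partial>S) = (\<integral>\<^sup>+x. f (case_nat (fst x) (snd x)) \<partial>(M \<Otimes>\<^sub>M S))"
    by (subst PiM_iter[symmetric]) (simp add: nn_integral_distr split_beta')
  also have "\<dots> = (\<integral>\<^sup>+s. \<integral>\<^sup>+\<omega>. f (case_nat s \<omega>) \<partial>S \<partial>M)"
    by (subst P.nn_integral_fst[symmetric]) auto
  finally show ?thesis .
qed

lemma (in sequence_space) integral_case_nat:
  fixes f :: "_ \<Rightarrow> 'b::{banach, second_countable_topology}"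
  assumes f: "integrable S f"
  shows "(\<integral>\<omega>. f \<omega> \<partial>S) = (\<integral>s. \<integral>\<omega>. f (case_nat s \<omega>) \<partial>S \<partial>M)"
    and "integrable M (\<lambda>s. \<integral>\<omega>. f (case_nat s \<omega>) \<partial>S)"
proof -
  interpret pair_sigma_finite M S
    by (simp add: pair_sigma_finite_def M.sigma_finite_measure_axioms P.sigma_finite_measure_axioms)
  have [measurable]: "f \<in> borel_measurable S" using f by simp
  have int: "integrable (M \<Otimes>\<^sub>M S) (\<lambda>x. f (case_nat (fst x) (snd x)))"
    using f by (subst (asm) PiM_iter[symmetric]) (simp add: integrable_distr_eq split_beta')
  have "(\<integral>\<omega>. f \<omega> \<partial>S) = (\<integral>x. f (case_nat (fst x) (snd x)) \<partial>(M \<Otimes>\<^sub>M S))"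
    by (subst PiM_iter[symmetric]) (simp add: integral_distr split_beta')
  then show "(\<integral>\<omega>. f \<omega> \<partial>S) = (\<integral>s. \<integral>\<omega>. f (case_nat s \<omega>) \<partial>S \<partial>M)"
    using integral_fst'[OF int] by simp
  show "integrable M (\<lambda>s. \<integral>\<omega>. f (case_nat s \<omega>) \<partial>S)"
    using integrable_fst'[OF int] by simp
qed

lemma eq_0_if_le_mult_SUP:
  fixes f :: "'a \<Rightarrow> real"
  assumes "bdd_above (f ` A)" and "\<And>a. a \<in> A \<Longrightarrow> 0 \<le> f a"
    and "\<And>a. a \<in> A \<Longrightarrow> f a \<le> c * (SUP a\<in>A. f a)" and "c < 1" and "a \<in> A"
  shows "f a = 0"
proof -
  have "f a \<le> (SUP a\<in>A. f a)" using assms(1,5) by (rule cSUP_upper2) simp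
  moreover have "(SUP a\<in>A. f a) \<le> c * (SUP a\<in>A. f a)"
    using assms(3,5) by (intro cSUP_least) auto
  ultimately show ?thesis using assms(2,4,5) by (smt (verit) mult_le_cancel_right1)
qed

section \<open>Holding times, marks and sample paths\<close>

abbreviation hold_measure :: "real measure" where
  "hold_measure \<equiv> density lborel (exponential_density 1)"

abbreviation mark_measure :: "real measure" where
  "mark_measure \<equiv> uniform_measure lborel {0..1}"

abbreviation fv_step_measure :: "(real \<times> real) measure" where
  "fv_step_measure \<equiv> hold_measure \<Otimes>\<^sub>M mark_measure"

lemma prob_space_hold_measure: "prob_space hold_measure"
  by (rule prob_space_exponential_density) simp

lemma prob_space_mark_measure: "prob_space mark_measure"
  by (intro prob_space_uniform_measure) auto

lemma prob_space_fv_step_measure: "prob_space fv_step_measure"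
  by (intro prob_space_pair prob_space_hold_measure prob_space_mark_measure)

lemma nn_integral_hold_measure_exp: "(\<integral>\<^sup>+e. exp (- e) \<partial>hold_measure) = ennreal (1/2)"
proof -
  have "(\<integral>\<^sup>+e. exp (- e) \<partial>hold_measure) = (\<integral>\<^sup>+e. ennreal (exp (- 2 * e)) * indicator {0..} e \<partial>lborel)"
    by (subst nn_integral_density)
      (auto simp: exponential_density_def ennreal_mult'[symmetric] mult_exp_exp
            intro!: nn_integral_cong split: split_indicator)
  also have "\<dots> = ennreal (0 - (- exp (- 2 * 0) / 2))"
  proof (rule nn_integral_FTC_atLeast)
    show "((\<lambda>x. - exp (- 2 * x) / 2) has_real_derivative exp (- 2 * x)) (at x)" for x :: real
      by (auto intro!: derivative_eq_intros)
    show "((\<lambda>x::real. - exp (- 2 * x) / 2) \<longlongrightarrow> 0) at_top"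
      by real_asymp
  qed auto
  finally show ?thesis by simp
qed

lemma measure_hold_measure_atMost: "0 \<le> t \<Longrightarrow> measure hold_measure {..t} = 1 - exp (- t)"
  using emeasure_erlang_density[of 1 0 t] by (simp add: measure_def erlang_CDF_0)

lemma measure_hold_measure_greaterThan: "0 \<le> t \<Longrightarrow> measure hold_measure {t<..} = exp (- t)"
proof -
  assume "0 \<le> t"
  interpret prob_space hold_measure by (rule prob_space_hold_measure)
  have "{t<..} = space hold_measure - {..t}" by auto
  then show ?thesis
    using prob_compl[of "{..t}"] measure_hold_measure_atMost[OF \<open>0 \<le> t\<close>] by simp
qed

lemma has_bochner_integral_hold_measure_greaterThan:
  assumes "0 \<le> t"
  shows "has_bochner_integral hold_measure (\<lambda>e. indicator {t<..} e * c) (exp (- t) * c)"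
proof -
  interpret prob_space hold_measure by (rule prob_space_hold_measure)
  have "has_bochner_integral hold_measure (indicator {t<..}) (measure hold_measure {t<..})"
    by (intro has_bochner_integral_real_indicator) (auto simp: less_top[symmetric] emeasure_finite)
  then show ?thesis
    using measure_hold_measure_greaterThan[OF assms] has_bochner_integral_mult_left by fastforce
qed

lemma integral_mark_measure_threshold:
  fixes A B w :: real
  assumes "0 \<le> w" "w \<le> 1"
  shows "(\<integral>u. (if u < w then A else B) \<partial>mark_measure) = w * A + (1 - w) * B"
proof -
  interpret prob_space mark_measure by (rule prob_space_mark_measure)
  have "(\<integral>u. (if u < w then A else B) \<partial>mark_measure) = (\<integral>u. B + (A - B) * indicator {..<w} u \<partial>mark_measure)"
    by (intro Bochner_Integration.integral_cong) (auto simp: indicator_def)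
  also have "\<dots> = B + (A - B) * measure mark_measure {..<w}"
    by (subst Bochner_Integration.integral_add)
       (auto simp: prob_space intro!: integrable_const_bound[where B=1])
  also have "measure mark_measure {..<w} = w"
  proof -
    have "{0..1} \<inter> {..<w} = {0..<w}" using assms by auto
    then show ?thesis using assms by simp
  qed
  finally show ?thesis by (simp add: algebra_simps)
qed

interpretation fv: sequence_space fv_step_measure
  by (simp add: sequence_space_def product_prob_space_def product_prob_space_axioms_def
      prob_space_fv_step_measure product_sigma_finite_def prob_space_imp_sigma_finite)

lemma fv_space_eq: "fv_space = fv.S"
  unfolding fv_space_def by simp

lemma prob_space_fv_space: "prob_space fv_space"
  by (simp add: fv_space_eq fv.P.prob_space_axioms)

lemma measurable_fv_holding_time[measurable]: "(\<lambda>\<omega>. fst (\<omega> k)) \<in> borel_measurable fv_space"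
  unfolding fv_space_def by measurable

lemma measurable_fv_mark[measurable]: "(\<lambda>\<omega>. snd (\<omega> k)) \<in> borel_measurable fv_space"
  unfolding fv_space_def by measurable

lemma measurable_fv_jump_time[measurable]: "(\<lambda>\<omega>. fv_jump_time \<omega> k) \<in> borel_measurable fv_space"
  by (induction k) simp_all

lemma measurable_fv_state[measurable]: "(\<lambda>\<omega>. fv_state \<theta> p x \<omega> k) \<in> borel_measurable fv_space"
  by (induction k) (simp_all add: fv_flow_def)

definition fv_path :: "real \<Rightarrow> real \<Rightarrow> real \<Rightarrow> (nat \<Rightarrow> real \<times> real) \<Rightarrow> real \<Rightarrow> real" where
  "fv_path \<theta> p x \<omega> t =
     (let k = LEAST k. t < fv_jump_time \<omega> (Suc k)
      in fv_flow \<theta> p (t - fv_jump_time \<omega> k) (fv_state \<theta> p x \<omega> k))"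

lemma fv_xi_eq_fv_path: "fv_xi \<theta>\<^sub>1 \<theta>\<^sub>2 x \<omega> t = fv_path (\<theta>\<^sub>1 + \<theta>\<^sub>2) (\<theta>\<^sub>1 / (\<theta>\<^sub>1 + \<theta>\<^sub>2)) x \<omega> t"
  by (simp add: fv_xi_def fv_path_def Let_def)

lemma measurable_fv_path[measurable]: "(\<lambda>\<omega>. fv_path \<theta> p x \<omega> t) \<in> borel_measurable fv_space"
  unfolding fv_path_def Let_def fv_flow_def by measurable

definition fv_regular :: "(nat \<Rightarrow> real \<times> real) \<Rightarrow> bool" where
  "fv_regular \<omega> \<longleftrightarrow> (\<forall>k. 0 \<le> fst (\<omega> k)) \<and> (\<forall>N::nat. \<exists>k. real N < fv_jump_time \<omega> k)"

lemma measurable_fv_regular[measurable]: "Measurable.pred fv_space fv_regular"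
  unfolding fv_regular_def by measurable

lemma fv_regular_iff:
  "fv_regular \<omega> \<longleftrightarrow> (\<forall>k. 0 \<le> fst (\<omega> k)) \<and> (\<forall>r. \<exists>k. r < fv_jump_time \<omega> k)"
proof -
  have "(\<forall>N::nat. \<exists>k. real N < fv_jump_time \<omega> k) \<longleftrightarrow> (\<forall>r. \<exists>k. r < fv_jump_time \<omega> k)"
    by (metis less_trans reals_Archimedean2)
  then show ?thesis unfolding fv_regular_def by blast
qed

lemma fv_jump_time_mono:
  assumes "\<forall>k. 0 \<le> fst (\<omega> k)" and "k \<le> j"
  shows "fv_jump_time \<omega> k \<le> fv_jump_time \<omega> j"
  using assms(2) by (induction j rule: dec_induct) (auto intro: order_trans add_increasing2 assms(1)[rule_format])

lemma fv_jump_time_case_nat [simp]: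
  "fv_jump_time (case_nat s \<omega>) (Suc k) = fst s + fv_jump_time \<omega> k"
  by (induction k) auto

lemma fv_state_case_nat [simp]:
  "fv_state \<theta> p x (case_nat s \<omega>) (Suc k) =
     fv_state \<theta> p (if snd s < fv_flow \<theta> p (fst s) x then 1 else 0) \<omega> k"
  by (induction k) auto

(* From now on sequences are unfolded at their head, by the two rules above. *)
declare fv_jump_time.simps(2) [simp del] fv_state.simps(2) [simp del]

lemma fv_regular_case_nat: "fv_regular (case_nat (e, u) \<omega>) \<longleftrightarrow> 0 \<le> e \<and> fv_regular \<omega>"
proof -
  have nonneg: "(\<forall>k. 0 \<le> fst (case_nat (e, u) \<omega> k)) \<longleftrightarrow> 0 \<le> e \<and> (\<forall>k. 0 \<le> fst (\<omega> k))"
    by (metis fst_conv nat.case(1) nat.case(2) nat.exhaust)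
  have "(\<forall>r. \<exists>k. r < fv_jump_time (case_nat (e, u) \<omega>) k) \<longleftrightarrow> (\<forall>r. \<exists>k. r < fv_jump_time \<omega> k)"
    if "0 \<le> e"
  proof safe
    fix r assume "\<forall>r. \<exists>k. r < fv_jump_time (case_nat (e, u) \<omega>) k"
    then obtain k where k: "max r 0 + e < fv_jump_time (case_nat (e, u) \<omega>) k" by blast
    with that obtain j where "k = Suc j" by (cases k) auto
    with k show "\<exists>k. r < fv_jump_time \<omega> k" by auto
  next
    fix r assume "\<forall>r. \<exists>k. r < fv_jump_time \<omega> k"
    then obtain k where "r - e < fv_jump_time \<omega> k" by blast
    then show "\<exists>k. r < fv_jump_time (case_nat (e, u) \<omega>) k"
      by (intro exI[of _ "Suc k"]) simp
  qed
  with nonneg show ?thesis unfolding fv_regular_iff by blast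
qed

lemma fv_path_case_nat_before_jump:
  assumes "t < e"
  shows "fv_path \<theta> p x (case_nat (e, u) \<omega>) t = fv_flow \<theta> p t x"
proof -
  have "(LEAST k. t < fv_jump_time (case_nat (e, u) \<omega>) (Suc k)) = 0"
    using assms by (intro Least_eq_0) simp
  then show ?thesis unfolding fv_path_def by simp
qed

lemma fv_path_case_nat_after_jump:
  assumes "fv_regular \<omega>" and "0 \<le> e" and "e \<le> t"
  shows "fv_path \<theta> p x (case_nat (e, u) \<omega>) t =
    fv_path \<theta> p (if u < fv_flow \<theta> p e x then 1 else 0) \<omega> (t - e)"
proof -
  define P where "P k \<longleftrightarrow> t < fv_jump_time (case_nat (e, u) \<omega>) (Suc k)" for k
  have P_Suc: "P (Suc k) \<longleftrightarrow> t - e < fv_jump_time \<omega> (Suc k)" for k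
    unfolding P_def by (simp add: diff_less_eq add.commute)
  obtain k where "t - e < fv_jump_time \<omega> k"
    using assms(1) unfolding fv_regular_iff by blast
  also have "\<dots> \<le> fv_jump_time \<omega> (Suc k)"
    using assms(1) unfolding fv_regular_iff by (intro fv_jump_time_mono) auto
  finally have "P (Suc k)" unfolding P_Suc .
  moreover have "\<not> P 0" using assms unfolding P_def by simp
  ultimately have "(LEAST k. P k) = Suc (LEAST k. t - e < fv_jump_time \<omega> (Suc k))"
    unfolding P_Suc[symmetric] by (rule Least_Suc)
  then show ?thesis
    unfolding fv_path_def Let_def P_def by (simp add: algebra_simps)
qed

lemma fv_flow_mem_unit_interval:
  assumes "0 \<le> \<theta>" "0 \<le> p" "p \<le> 1" "0 \<le> s" "0 \<le> y" "y \<le> 1"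
  shows "0 \<le> fv_flow \<theta> p s y" "fv_flow \<theta> p s y \<le> 1"
proof -
  define w where "w = exp (- (\<theta> / 2) * s)"
  have w: "0 < w" "w \<le> 1" using assms unfolding w_def by auto
  have eq: "fv_flow \<theta> p s y = (1 - w) * p + w * y"
    by (simp add: fv_flow_def w_def algebra_simps)
  show "0 \<le> fv_flow \<theta> p s y" "fv_flow \<theta> p s y \<le> 1"
    unfolding eq using w assms by (auto intro!: convex_bound_le add_nonneg_nonneg)
qed

lemma fv_path_mem_unit_interval:
  assumes "fv_regular \<omega>" "0 \<le> \<theta>" "0 \<le> p" "p \<le> 1" "0 \<le> x" "x \<le> 1" "0 \<le> t"
  shows "0 \<le> fv_path \<theta> p x \<omega> t \<and> fv_path \<theta> p x \<omega> t \<le> 1"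
proof -
  define k where "k = (LEAST k. t < fv_jump_time \<omega> (Suc k))"
  have "fv_jump_time \<omega> k \<le> t"
  proof (cases k)
    case (Suc j)
    then have "\<not> t < fv_jump_time \<omega> (Suc j)" unfolding k_def by (intro not_less_Least) simp
    then show ?thesis by (simp add: Suc)
  qed (use assms in simp)
  moreover have "0 \<le> fv_state \<theta> p x \<omega> k \<and> fv_state \<theta> p x \<omega> k \<le> 1"
    using assms by (cases k) (auto simp: fv_state.simps(2))
  ultimately show ?thesis
    using fv_flow_mem_unit_interval assms unfolding fv_path_def Let_def k_def[symmetric] by simp
qed

section \<open>Non-explosion\<close>

lemma AE_fv_holding_times_nonneg: "AE \<omega> in fv_space. \<forall>k. 0 \<le> fst (\<omega> k)"
proof -
  interpret mark: prob_space mark_measure by (rule prob_space_mark_measure)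
  have "AE e in hold_measure. 0 \<le> e"
    by (subst AE_density) (auto simp: exponential_density_def)
  then have "AE e in distr fv_step_measure hold_measure fst. 0 \<le> e"
    by (subst mark.distr_pair_fst)
  then have "AE s in fv_step_measure. 0 \<le> fst s"
    by (rule AE_distrD[rotated]) simp
  then show ?thesis
    unfolding AE_all_countable fv_space_def
    by (intro allI AE_PiM_component) (auto simp: prob_space_fv_step_measure)
qed

lemma nn_integral_fv_exp_jump_time: "(\<integral>\<^sup>+\<omega>. exp (- fv_jump_time \<omega> k) \<partial>fv_space) = ennreal ((1/2) ^ k)"
proof (induction k)
  case 0
  then show ?case using prob_space.emeasure_space_1[OF prob_space_fv_space] by simp
next
  case (Suc k)
  interpret mark: prob_space mark_measure by (rule prob_space_mark_measure)
  have "(\<integral>\<^sup>+\<omega>. exp (- fv_jump_time \<omega> (Suc k)) \<partial>fv_space)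
      = (\<integral>\<^sup>+s. \<integral>\<^sup>+\<omega>. ennreal (exp (- fst s)) * exp (- fv_jump_time \<omega> k) \<partial>fv_space \<partial>fv_step_measure)"
    unfolding fv_space_eq
    by (subst fv.nn_integral_case_nat)
       (auto simp: ennreal_mult'[symmetric] mult_exp_exp fv_space_eq[symmetric] intro!: nn_integral_cong)
  also have "\<dots> = (\<integral>\<^sup>+s. ennreal (exp (- fst s)) * ennreal ((1/2) ^ k) \<partial>fv_step_measure)"
    by (simp add: nn_integral_cmult Suc)
  also have "\<dots> = (\<integral>\<^sup>+e. exp (- e) \<partial>hold_measure) * ennreal ((1/2) ^ k)"
    by (simp add: Suc nn_integral_multc mark.nn_integral_fst[symmetric] mark.emeasure_space_1)
  finally show ?case
    using ennreal_mult[of "1/2" "(1/2) ^ k"] by (simp add: nn_integral_hold_measure_exp)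
qed

(* Markov's inequality for exp (- T_k), whose mean is 2^(-k). *)
lemma AE_fv_jump_time_unbounded: "AE \<omega> in fv_space. \<exists>k. r < fv_jump_time \<omega> k"
proof -
  let ?A = "{\<omega> \<in> space fv_space. \<forall>k. fv_jump_time \<omega> k \<le> r}"
  have bound: "emeasure fv_space ?A \<le> ennreal (exp r * (1/2) ^ k)" for k
  proof -
    have "emeasure fv_space ?A = (\<integral>\<^sup>+\<omega>. indicator ?A \<omega> \<partial>fv_space)"
      by simp
    also have "\<dots> \<le> (\<integral>\<^sup>+\<omega>. ennreal (exp r) * exp (- fv_jump_time \<omega> k) \<partial>fv_space)"
    proof (intro nn_integral_mono)
      fix \<omega> assume "\<omega> \<in> space fv_space"
      then show "indicator ?A \<omega> \<le> ennreal (exp r) * exp (- fv_jump_time \<omega> k)"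
        by (auto simp: indicator_def ennreal_mult'[symmetric] mult_exp_exp)
    qed
    also have "\<dots> = ennreal (exp r * (1/2) ^ k)"
      by (simp add: nn_integral_cmult nn_integral_fv_exp_jump_time ennreal_mult)
    finally show ?thesis .
  qed
  have "(\<lambda>k. ennreal (exp r * (1/2) ^ k)) \<longlonglongrightarrow> ennreal (exp r * 0)"
    by (intro tendsto_ennrealI tendsto_mult_left LIMSEQ_power_zero) simp
  then have "emeasure fv_space ?A \<le> 0"
    using bound by (intro LIMSEQ_le_const) auto
  then show ?thesis
    by (subst AE_iff_measurable[OF _ refl]) (auto simp: not_less)
qed

lemma AE_fv_regular: "AE \<omega> in fv_space. fv_regular \<omega>"
  unfolding fv_regular_def using AE_fv_holding_times_nonneg AE_fv_jump_time_unbounded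
  by (simp add: AE_all_countable)

section \<open>The renewal equation for the centred moments\<close>

(* Restricting to regular paths does not change the integral (fv_moment_eq_integral), but it makes
   the first-jump decomposition regular_fv_path_power_case_nat hold for every path. *)
definition fv_moment :: "real \<Rightarrow> real \<Rightarrow> nat \<Rightarrow> real \<Rightarrow> real \<Rightarrow> real" where
  "fv_moment \<theta> p n x t =
     (\<integral>\<omega>. (if fv_regular \<omega> then (fv_path \<theta> p x \<omega> t - p) ^ n else 0) \<partial>fv_space)"

lemma fv_moment_eq_integral:
  "fv_moment \<theta> p n x t = (\<integral>\<omega>. (fv_path \<theta> p x \<omega> t - p) ^ n \<partial>fv_space)"
  unfolding fv_moment_def using AE_fv_regular by (intro integral_cong_AE) auto

lemma abs_regular_fv_path_power_le_1:
  assumes "0 \<le> \<theta>" "0 \<le> p" "p \<le> 1" "0 \<le> x" "x \<le> 1" "0 \<le> t"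
  shows "\<bar>if fv_regular \<omega> then (fv_path \<theta> p x \<omega> t - p) ^ n else 0\<bar> \<le> 1"
proof -
  have "\<bar>fv_path \<theta> p x \<omega> t - p\<bar> \<le> 1" if "fv_regular \<omega>"
    using fv_path_mem_unit_interval[OF that assms] assms by auto
  then show ?thesis by (auto simp: power_abs intro!: power_le_one)
qed

lemma integrable_regular_fv_path_power:
  assumes "0 \<le> \<theta>" "0 \<le> p" "p \<le> 1" "0 \<le> x" "x \<le> 1" "0 \<le> t"
  shows "integrable fv_space (\<lambda>\<omega>. if fv_regular \<omega> then (fv_path \<theta> p x \<omega> t - p) ^ n else 0)"
proof -
  interpret prob_space fv_space by (rule prob_space_fv_space)
  show ?thesis
    using abs_regular_fv_path_power_le_1[OF assms] by (intro integrable_const_bound[where B=1]) auto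
qed

lemma abs_fv_moment_le_1:
  assumes "0 \<le> \<theta>" "0 \<le> p" "p \<le> 1" "0 \<le> x" "x \<le> 1" "0 \<le> t"
  shows "\<bar>fv_moment \<theta> p n x t\<bar> \<le> 1"
proof -
  interpret prob_space fv_space by (rule prob_space_fv_space)
  have "\<bar>fv_moment \<theta> p n x t\<bar>
      \<le> (\<integral>\<omega>. \<bar>if fv_regular \<omega> then (fv_path \<theta> p x \<omega> t - p) ^ n else 0\<bar> \<partial>fv_space)"
    unfolding fv_moment_def by (rule integral_abs_bound)
  also have "\<dots> \<le> (\<integral>\<omega>. 1 \<partial>fv_space)"
    using abs_regular_fv_path_power_le_1[OF assms]
    by (intro integral_mono integrable_abs integrable_regular_fv_path_power assms) auto
  finally show ?thesis by (simp add: prob_space)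
qed

lemma regular_fv_path_power_case_nat:
  assumes "0 \<le> t"
  shows "(if fv_regular (case_nat (e, u) \<omega>) then (fv_path \<theta> p x (case_nat (e, u) \<omega>) t - p) ^ n else 0) =
    indicator {t<..} e * (if fv_regular \<omega> then (fv_flow \<theta> p t x - p) ^ n else 0) +
    indicator {0..t} e * (let y = if u < fv_flow \<theta> p e x then 1 else 0 in
       if fv_regular \<omega> then (fv_path \<theta> p y \<omega> (t - e) - p) ^ n else 0)"
  using assms by (auto simp: fv_regular_case_nat fv_path_case_nat_before_jump
      fv_path_case_nat_after_jump indicator_def not_less)

definition fv_renewal_integrand ::
    "real \<Rightarrow> real \<Rightarrow> nat \<Rightarrow> real \<Rightarrow> real \<Rightarrow> (real \<Rightarrow> real) \<Rightarrow> (real \<Rightarrow> real) \<Rightarrow> real \<Rightarrow> real" where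
  "fv_renewal_integrand \<theta> p n x t a b e =
     indicator {t<..} e * (fv_flow \<theta> p t x - p) ^ n +
     indicator {0..t} e * (fv_flow \<theta> p e x * a (t - e) + (1 - fv_flow \<theta> p e x) * b (t - e))"

lemma integral_regular_fv_path_power_case_nat:
  assumes "0 \<le> \<theta>" "0 \<le> p" "p \<le> 1" "0 \<le> x" "x \<le> 1" "0 \<le> t"
  shows "(\<integral>\<omega>. (if fv_regular (case_nat (e, u) \<omega>) then (fv_path \<theta> p x (case_nat (e, u) \<omega>) t - p) ^ n else 0)
      \<partial>fv_space) =
    indicator {t<..} e * (fv_flow \<theta> p t x - p) ^ n +
    indicator {0..t} e * fv_moment \<theta> p n (if u < fv_flow \<theta> p e x then 1 else 0) (t - e)"
proof -
  interpret prob_space fv_space by (rule prob_space_fv_space)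
  define c where "c = (fv_flow \<theta> p t x - p) ^ n"
  define y where "y = (if u < fv_flow \<theta> p e x then 1 else (0::real))"
  have "integrable fv_space (\<lambda>\<omega>. indicator {t<..} e * (if fv_regular \<omega> then c else 0))"
    by (intro integrable_mult_right integrable_const_bound[where B="\<bar>c\<bar>"]) auto
  moreover have "integrable fv_space
      (\<lambda>\<omega>. indicator {0..t} e * (if fv_regular \<omega> then (fv_path \<theta> p y \<omega> (t - e) - p) ^ n else 0))"
    using assms unfolding y_def
    by (intro integrable_mult_right integrable_regular_fv_path_power) (auto simp: indicator_def)
  moreover have "(\<integral>\<omega>. (if fv_regular \<omega> then c else 0) \<partial>fv_space) = (\<integral>\<omega>. c \<partial>fv_space)"
  proof (rule integral_cong_AE)
    show "AE \<omega> in fv_space. (if fv_regular \<omega> then c else 0) = c"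
      using AE_fv_regular by eventually_elim simp
  qed simp_all
  ultimately show ?thesis
    unfolding regular_fv_path_power_case_nat[OF assms(6)] fv_moment_def Let_def
      c_def[symmetric] y_def[symmetric]
    by (simp add: prob_space)
qed

lemma fv_moment_renewal:
  assumes "0 \<le> \<theta>" "0 \<le> p" "p \<le> 1" "0 \<le> x" "x \<le> 1" "0 \<le> t"
  shows "has_bochner_integral hold_measure
    (fv_renewal_integrand \<theta> p n x t (fv_moment \<theta> p n 1) (fv_moment \<theta> p n 0)) (fv_moment \<theta> p n x t)"
proof -
  interpret mark: prob_space mark_measure by (rule prob_space_mark_measure)
  interpret pair_sigma_finite hold_measure mark_measure
    by (simp add: pair_sigma_finite_def prob_space_hold_measure prob_space_mark_measure
        prob_space_imp_sigma_finite)
  define K where "K e u = indicator {t<..} e * (fv_flow \<theta> p t x - p) ^ n +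
    indicator {0..t} e * fv_moment \<theta> p n (if u < fv_flow \<theta> p e x then 1 else 0) (t - e)" for e u
  have "integrable fv.S (\<lambda>\<omega>. if fv_regular \<omega> then (fv_path \<theta> p x \<omega> t - p) ^ n else 0)"
    using integrable_regular_fv_path_power[OF assms] unfolding fv_space_eq .
  from fv.integral_case_nat[OF this] integral_regular_fv_path_power_case_nat[OF assms, of "fst s" "snd s" for s]
  have "fv_moment \<theta> p n x t = (\<integral>s. K (fst s) (snd s) \<partial>fv_step_measure)"
    and int_K: "integrable fv_step_measure (\<lambda>s. K (fst s) (snd s))"
    unfolding fv_moment_def fv_space_eq prod.collapse K_def by simp_all
  moreover have "(\<integral>u. K e u \<partial>mark_measure) =
      fv_renewal_integrand \<theta> p n x t (fv_moment \<theta> p n 1) (fv_moment \<theta> p n 0) e" for e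
  proof (cases "e \<in> {0..t}")
    case True
    then have "0 \<le> fv_flow \<theta> p e x" "fv_flow \<theta> p e x \<le> 1"
      using fv_flow_mem_unit_interval assms by auto
    with True show ?thesis
      unfolding K_def fv_renewal_integrand_def
      by (simp add: if_distrib[of "\<lambda>y. fv_moment \<theta> p n y (t - e)"] integral_mark_measure_threshold)
  qed (auto simp: K_def fv_renewal_integrand_def mark.prob_space)
  ultimately show ?thesis
    using integral_fst'[OF int_K] integrable_fst'[OF int_K] by (simp add: has_bochner_integral_iff)
qed

section \<open>The closed form solves the renewal equation\<close>

definition fv_moment_formula :: "real \<Rightarrow> real \<Rightarrow> nat \<Rightarrow> real \<Rightarrow> real \<Rightarrow> real" where
  "fv_moment_formula \<theta> p n x t =
      exp (- t * (1 + real n * \<theta> / 2)) * (x - p) ^ n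
    + (2 / \<theta>) / (real n + 2 / \<theta>) * (p * (1 - p) ^ n + (-1) ^ n * (1 - p) * p ^ n)
        * (1 - exp (- t * (1 + real n * \<theta> / 2)))
    + (x - p) * exp (- \<theta> * t / 2) * (2 / \<theta>) / (real n - 1 + 2 / \<theta>)
        * ((1 - p) ^ n - (-1) ^ n * p ^ n)
        * (1 - exp (- t * (1 + (real n - 1) * \<theta> / 2)))"

locale fv_closed_form =
  fixes \<theta> p :: real and n :: nat
  assumes \<theta>_pos: "0 < \<theta>"
begin

abbreviation F :: "real \<Rightarrow> real \<Rightarrow> real" where "F \<equiv> fv_moment_formula \<theta> p n"

(* rate and prev_rate are the decay rates 1 + k theta/2 of the centred moments of orders n and n - 1. *)
definition rate :: real where "rate = 1 + real n * \<theta> / 2"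
definition prev_rate :: real where "prev_rate = 1 + (real n - 1) * \<theta> / 2"

definition stationary_moment :: real where
  "stationary_moment = (p * (1 - p) ^ n + (1 - p) * (- p) ^ n) / rate"

definition transient_coeff :: real where
  "transient_coeff = ((1 - p) ^ n - (- p) ^ n) / prev_rate"

lemma rate_pos: "0 < rate"
  using \<theta>_pos by (simp add: rate_def add_pos_nonneg)

lemma exp_rate_split: "exp (- \<theta> * t / 2) * exp (- t * prev_rate) = exp (- t * rate)"
  unfolding mult_exp_exp rate_def prev_rate_def by (rule arg_cong[where f = exp]) (simp add: field_simps)

lemma stationary_moment_mult_rate: "stationary_moment * rate = p * (1 - p) ^ n + (1 - p) * (- p) ^ n"
  using rate_pos by (simp add: stationary_moment_def)

lemma transient_coeff_mult_prev_rate: "transient_coeff * prev_rate = (1 - p) ^ n - (- p) ^ n"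
proof (cases n)
  case 0
  then show ?thesis unfolding transient_coeff_def by simp
next
  case (Suc k)
  have "0 < prev_rate" unfolding prev_rate_def using \<theta>_pos by (simp add: Suc add_pos_nonneg)
  then show ?thesis by (simp add: transient_coeff_def)
qed

lemma formula_eq:
  "F x t = exp (- t * rate) * (x - p) ^ n + stationary_moment * (1 - exp (- t * rate))
    + (x - p) * transient_coeff * (exp (- \<theta> * t / 2) - exp (- t * rate))"
proof -
  have rate_coeff: "(2 / \<theta>) / (real n + 2 / \<theta>) = 1 / rate"
    using \<theta>_pos by (simp add: rate_def field_simps)
  have "(2 / \<theta>) / (real n + 2 / \<theta>) * (p * (1 - p) ^ n + (-1) ^ n * (1 - p) * p ^ n) = stationary_moment"
    unfolding rate_coeff stationary_moment_def power_minus[of p] using rate_pos by (simp add: field_simps)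
  moreover have "a * (2 / \<theta>) / (real n - 1 + 2 / \<theta>) * ((1 - p) ^ n - (-1) ^ n * p ^ n)
      = a * transient_coeff" for a
  proof (cases n)
    case 0
    then show ?thesis unfolding transient_coeff_def by simp
  next
    case (Suc k)
    then have "0 < real n - 1 + 2 / \<theta>" "0 < prev_rate"
      unfolding prev_rate_def using \<theta>_pos by (simp_all add: add_pos_nonneg add_nonneg_pos)
    then have prev_rate_coeff: "(2 / \<theta>) / (real n - 1 + 2 / \<theta>) = 1 / prev_rate"
      unfolding prev_rate_def using \<theta>_pos by (simp add: field_simps)
    show ?thesis
      unfolding times_divide_eq_right[symmetric] prev_rate_coeff transient_coeff_def power_minus[of p]
      by (simp add: algebra_simps diff_divide_distrib)
  qed
  ultimately have "F x t = exp (- t * rate) * (x - p) ^ n + stationary_moment * (1 - exp (- t * rate))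
      + (x - p) * exp (- \<theta> * t / 2) * transient_coeff * (1 - exp (- t * prev_rate))"
    unfolding fv_moment_formula_def rate_def[symmetric] prev_rate_def[symmetric] by (simp only:)
  then show ?thesis
    unfolding exp_rate_split[symmetric] by (simp add: algebra_simps)
qed

lemma weighted_sum_formula:
  "p * F 1 r + (1 - p) * F 0 r = stationary_moment + stationary_moment * (rate - 1) * exp (- r * rate)"
proof -
  have "p * F 1 r + (1 - p) * F 0 r =
      exp (- r * rate) * (p * (1 - p) ^ n + (1 - p) * (- p) ^ n) + stationary_moment * (1 - exp (- r * rate))"
    unfolding formula_eq by (simp add: algebra_simps)
  then show ?thesis
    unfolding stationary_moment_mult_rate[symmetric] by (simp add: algebra_simps)
qed

lemma difference_formula:
  "F 1 r - F 0 r = transient_coeff * (prev_rate - 1) * exp (- r * rate) + transient_coeff * exp (- \<theta> * r / 2)"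
proof -
  have "F 1 r - F 0 r = exp (- r * rate) * ((1 - p) ^ n - (- p) ^ n)
      + transient_coeff * (exp (- \<theta> * r / 2) - exp (- r * rate))"
    unfolding formula_eq by (simp add: algebra_simps)
  then show ?thesis
    unfolding transient_coeff_mult_prev_rate[symmetric] exp_rate_split[symmetric] by (simp add: algebra_simps)
qed

lemma exp_neg_mult_formula_average:
  "exp (- e) * (fv_flow \<theta> p e x * F 1 (t - e) + (1 - fv_flow \<theta> p e x) * F 0 (t - e)) =
     stationary_moment * exp (- e)
     + stationary_moment * (rate - 1) * exp ((rate - 1) * e - t * rate)
     + (x - p) * transient_coeff * exp (- e - \<theta> * t / 2)
     + (x - p) * transient_coeff * (prev_rate - 1) * exp ((prev_rate - 1) * e - t * rate)"
proof -
  have average: "fv_flow \<theta> p e x * F 1 (t - e) + (1 - fv_flow \<theta> p e x) * F 0 (t - e)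
      = (p * F 1 (t - e) + (1 - p) * F 0 (t - e)) + (x - p) * exp (- (\<theta> / 2) * e) * (F 1 (t - e) - F 0 (t - e))"
    unfolding fv_flow_def by (simp add: algebra_simps)
  have "exp (- e) * (fv_flow \<theta> p e x * F 1 (t - e) + (1 - fv_flow \<theta> p e x) * F 0 (t - e)) =
      stationary_moment * exp (- e)
      + stationary_moment * (rate - 1) * (exp (- e) * exp (- (t - e) * rate))
      + (x - p) * transient_coeff * (exp (- (\<theta> / 2) * e) * exp (- e) * exp (- \<theta> * (t - e) / 2))
      + (x - p) * transient_coeff * (prev_rate - 1) * (exp (- (\<theta> / 2) * e) * exp (- e) * exp (- (t - e) * rate))"
    unfolding average weighted_sum_formula difference_formula by (simp add: algebra_simps)
  moreover have "exp (- e) * exp (- (t - e) * rate) = exp ((rate - 1) * e - t * rate)"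
    and "exp (- (\<theta> / 2) * e) * exp (- e) * exp (- \<theta> * (t - e) / 2) = exp (- e - \<theta> * t / 2)"
    and "exp (- (\<theta> / 2) * e) * exp (- e) * exp (- (t - e) * rate) = exp ((prev_rate - 1) * e - t * rate)"
    unfolding mult_exp_exp rate_def prev_rate_def by (rule arg_cong[where f = exp]; simp add: field_simps)+
  ultimately show ?thesis by (simp only:)
qed

lemma has_bochner_integral_formula_after_jump:
  assumes "0 \<le> t"
  shows "has_bochner_integral hold_measure
    (\<lambda>e. indicator {0..t} e * (fv_flow \<theta> p e x * F 1 (t - e) + (1 - fv_flow \<theta> p e x) * F 0 (t - e)))
    (stationary_moment * (1 - exp (- t * rate)) + (x - p) * transient_coeff * (exp (- \<theta> * t / 2) - exp (- t * rate)))"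
proof -
  define C where "C = stationary_moment"
  define D where "D = transient_coeff"
  define G where "G e = - C * exp (- e) + C * exp ((rate - 1) * e - t * rate)
    - (x - p) * D * exp (- e - \<theta> * t / 2) + (x - p) * D * exp ((prev_rate - 1) * e - t * rate)" for e
  have "has_bochner_integral lborel
      (\<lambda>e. exp (- e) * (fv_flow \<theta> p e x * F 1 (t - e) + (1 - fv_flow \<theta> p e x) * F 0 (t - e))
        * indicator {0..t} e) (G t - G 0)"
    unfolding exp_neg_mult_formula_average G_def C_def[symmetric] D_def[symmetric]
    by (intro has_bochner_integral_FTC_Icc_real assms)
       (auto intro!: derivative_eq_intros continuous_intros simp: algebra_simps)
  then have "has_bochner_integral hold_measure
      (\<lambda>e. indicator {0..t} e * (fv_flow \<theta> p e x * F 1 (t - e) + (1 - fv_flow \<theta> p e x) * F 0 (t - e))) (G t - G 0)"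
    by (intro has_bochner_integral_density)
       (auto simp: fv_moment_formula_def fv_flow_def exponential_density_def indicator_def
             elim!: has_bochner_integral_cong[THEN iffD1, OF refl _ refl, rotated])
  moreover have "exp ((rate - 1) * t - t * rate) = exp (- t)"
    and "exp ((prev_rate - 1) * t - t * rate) = exp (- t - \<theta> * t / 2)"
    unfolding rate_def prev_rate_def by (rule arg_cong[where f = exp]; simp add: field_simps)+
  then have "G t = 0" unfolding G_def by simp
  moreover have "G 0 = - C + C * exp (- t * rate) - (x - p) * D * exp (- \<theta> * t / 2) + (x - p) * D * exp (- t * rate)"
    unfolding G_def by simp
  ultimately show ?thesis by (simp add: C_def D_def algebra_simps)
qed

lemma formula_renewal:
  assumes "0 \<le> t"
  shows "has_bochner_integral hold_measure (fv_renewal_integrand \<theta> p n x t (F 1) (F 0)) (F x t)"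
proof -
  have "exp (- t) * (fv_flow \<theta> p t x - p) ^ n = exp (- t) * exp (real n * (- (\<theta> / 2) * t)) * (x - p) ^ n"
    unfolding fv_flow_def exp_of_nat_mult by (simp add: power_mult_distrib)
  also have "exp (- t) * exp (real n * (- (\<theta> / 2) * t)) = exp (- t * rate)"
    unfolding mult_exp_exp rate_def by (rule arg_cong[where f = exp]) (simp add: algebra_simps)
  finally have "exp (- t) * (fv_flow \<theta> p t x - p) ^ n + (stationary_moment * (1 - exp (- t * rate))
      + (x - p) * transient_coeff * (exp (- \<theta> * t / 2) - exp (- t * rate))) = F x t"
    unfolding formula_eq by simp
  then show ?thesis
    using has_bochner_integral_add[OF has_bochner_integral_hold_measure_greaterThan[OF assms]
        has_bochner_integral_formula_after_jump[OF assms], of "(fv_flow \<theta> p t x - p) ^ n" x]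
    by (simp add: fv_renewal_integrand_def[abs_def])
qed

lemma formula_bounded:
  obtains B where "\<And>s. s \<in> {0..T} \<Longrightarrow> \<bar>F y s\<bar> \<le> B"
proof -
  have "continuous_on {0..T} (F y)"
    unfolding formula_eq by (intro continuous_intros) auto
  then have "bounded (F y ` {0..T})"
    by (intro compact_imp_bounded compact_continuous_image compact_Icc)
  then show ?thesis
    using that unfolding bounded_iff real_norm_def by (metis atLeastAtMost_iff image_eqI)
qed

end

section \<open>Uniqueness of bounded solutions\<close>

lemma fv_renewal_difference_bound:
  assumes "0 \<le> \<theta>" "0 \<le> p" "p \<le> 1" "0 \<le> y" "y \<le> 1" "0 \<le> s"
    and d: "has_bochner_integral hold_measure
      (\<lambda>e. indicator {0..s} e * (fv_flow \<theta> p e y * d 1 (s - e) + (1 - fv_flow \<theta> p e y) * d 0 (s - e))) (d y s)"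
    and bound: "\<And>z r. z \<in> {0, 1} \<Longrightarrow> r \<in> {0..s} \<Longrightarrow> \<bar>d z r\<bar> \<le> M"
  shows "\<bar>d y s\<bar> \<le> M * (1 - exp (- s))"
proof -
  interpret prob_space hold_measure by (rule prob_space_hold_measure)
  have "0 \<le> M" using bound[of 0 0] assms(6) by fastforce
  have "\<bar>d y s\<bar> \<le> (\<integral>e. M * indicator {..s} e \<partial>hold_measure)"
    unfolding has_bochner_integral_integral_eq[OF d, symmetric]
  proof (rule integral_abs_bound_integral)
    show "integrable hold_measure (\<lambda>e. M * indicator {..s} e)"
      by (intro integrable_mult_right integrable_real_indicator) (auto simp: emeasure_finite less_top[symmetric])
    fix e :: real
    show "\<bar>indicator {0..s} e * (fv_flow \<theta> p e y * d 1 (s - e) + (1 - fv_flow \<theta> p e y) * d 0 (s - e))\<bar>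
        \<le> M * indicator {..s} e"
    proof (cases "e \<in> {0..s}")
      case True
      then have w: "0 \<le> fv_flow \<theta> p e y" "fv_flow \<theta> p e y \<le> 1"
        using fv_flow_mem_unit_interval assms(1-5) by auto
      have "\<bar>d 1 (s - e)\<bar> \<le> M" "\<bar>d 0 (s - e)\<bar> \<le> M" using True by (auto intro!: bound)
      then have "fv_flow \<theta> p e y * d 1 (s - e) + (1 - fv_flow \<theta> p e y) * d 0 (s - e) \<le> M"
        and "fv_flow \<theta> p e y * (- d 1 (s - e)) + (1 - fv_flow \<theta> p e y) * (- d 0 (s - e)) \<le> M"
        using w by (intro convex_bound_le; simp)+
      with True show ?thesis by (simp add: abs_le_iff algebra_simps)
    qed (use \<open>0 \<le> M\<close> in \<open>simp add: indicator_def\<close>)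
  qed (use d in \<open>simp add: has_bochner_integral_iff\<close>)
  also have "\<dots> = M * (1 - exp (- s))"
    using measure_hold_measure_atMost[OF assms(6)] by simp
  finally show ?thesis .
qed

lemma fv_renewal_integrand_diff:
  "fv_renewal_integrand \<theta> p n y s a b e - fv_renewal_integrand \<theta> p n y s a' b' e =
    indicator {0..s} e * (fv_flow \<theta> p e y * (a (s - e) - a' (s - e))
      + (1 - fv_flow \<theta> p e y) * (b (s - e) - b' (s - e)))"
  by (simp add: fv_renewal_integrand_def algebra_simps)

lemma fv_renewal_solution_unique:
  assumes "0 \<le> \<theta>" "0 \<le> p" "p \<le> 1"
    and u: "\<And>y s. y \<in> {0, 1} \<Longrightarrow> 0 \<le> s \<Longrightarrow>
      has_bochner_integral hold_measure (fv_renewal_integrand \<theta> p n y s (u 1) (u 0)) (u y s)"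
    and v: "\<And>y s. y \<in> {0, 1} \<Longrightarrow> 0 \<le> s \<Longrightarrow>
      has_bochner_integral hold_measure (fv_renewal_integrand \<theta> p n y s (v 1) (v 0)) (v y s)"
    and bounded: "\<And>y s. y \<in> {0, 1} \<Longrightarrow> s \<in> {0..T} \<Longrightarrow> \<bar>u y s - v y s\<bar> \<le> B"
    and "y \<in> {0, 1}" "s \<in> {0..T}"
  shows "u y s = v y s"
proof -
  define d where "d y s = u y s - v y s" for y s
  define A where "A = {0, 1::real} \<times> {0..T}"
  define M where "M = (SUP (z, r)\<in>A. \<bar>d z r\<bar>)"
  have bdd: "bdd_above ((\<lambda>(z, r). \<bar>d z r\<bar>) ` A)"
    using bounded unfolding A_def d_def by (intro bdd_aboveI2[where M=B]) auto
  have le_M: "\<bar>d z r\<bar> \<le> M" if "(z, r) \<in> A" for z r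
    unfolding M_def using that by (intro cSUP_upper2[OF bdd, of "(z, r)"]) auto
  have "0 \<le> M"
    using le_M[of 0 0] assms(8) by (fastforce simp: A_def)
  have "\<bar>d z r\<bar> \<le> (1 - exp (- T)) * M" if "(z, r) \<in> A" for z r
  proof -
    have z01: "z \<in> {0, 1}" and z: "0 \<le> z" "z \<le> 1" and r: "0 \<le> r" "r \<le> T"
      using that by (auto simp: A_def)
    have "has_bochner_integral hold_measure
        (\<lambda>e. indicator {0..r} e * (fv_flow \<theta> p e z * d 1 (r - e) + (1 - fv_flow \<theta> p e z) * d 0 (r - e)))
        (d z r)"
      using has_bochner_integral_diff[OF u[OF z01 r(1)] v[OF z01 r(1)]]
      unfolding fv_renewal_integrand_diff d_def .
    then have "\<bar>d z r\<bar> \<le> M * (1 - exp (- r))"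
    proof (rule fv_renewal_difference_bound[OF assms(1-3) z r(1)])
      show "\<bar>d z' r'\<bar> \<le> M" if "z' \<in> {0, 1}" "r' \<in> {0..r}" for z' r'
        using that r by (intro le_M) (auto simp: A_def)
    qed
    also have "\<dots> \<le> M * (1 - exp (- T))"
      using r \<open>0 \<le> M\<close> by (intro mult_left_mono) auto
    finally show ?thesis by (simp add: mult.commute)
  qed
  then have "(\<lambda>(z, r). \<bar>d z r\<bar>) (y, s) = 0"
    using assms(7,8) by (intro eq_0_if_le_mult_SUP[OF bdd, where c = "1 - exp (- T)"]) (auto simp: A_def M_def)
  then show ?thesis by (simp add: d_def)
qed

lemma fv_moment_eq_formula:
  assumes "0 < \<theta>" "0 \<le> p" "p \<le> 1" "0 \<le> x" "x \<le> 1" "0 \<le> t"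
  shows "fv_moment \<theta> p n x t = fv_moment_formula \<theta> p n x t"
proof -
  interpret fv_closed_form \<theta> p n by standard (rule assms(1))
  have jump_targets: "fv_moment \<theta> p n y s = F y s" if "y \<in> {0, 1}" "0 \<le> s" for y s
  proof -
    obtain B0 where B0: "\<And>r. r \<in> {0..s} \<Longrightarrow> \<bar>F 0 r\<bar> \<le> B0" using formula_bounded[where T = s and y = 0] by blast
    obtain B1 where B1: "\<And>r. r \<in> {0..s} \<Longrightarrow> \<bar>F 1 r\<bar> \<le> B1" using formula_bounded[where T = s and y = 1] by blast
    show ?thesis
    proof (rule fv_renewal_solution_unique[where \<theta> = \<theta> and p = p and n = n and u = "fv_moment \<theta> p n"
        and v = F and T = s
        and B = "1 + \<bar>B0\<bar> + \<bar>B1\<bar>"])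
      show "\<bar>fv_moment \<theta> p n z r - F z r\<bar> \<le> 1 + \<bar>B0\<bar> + \<bar>B1\<bar>" if "z \<in> {0, 1}" "r \<in> {0..s}" for z r
        using that abs_fv_moment_le_1[of \<theta> p z r n] B0[of r] B1[of r] assms by auto
    qed (use assms that fv_moment_renewal formula_renewal in auto)
  qed
  have "fv_renewal_integrand \<theta> p n x t (fv_moment \<theta> p n 1) (fv_moment \<theta> p n 0)
      = fv_renewal_integrand \<theta> p n x t (F 1) (F 0)"
    by (auto simp: fun_eq_iff fv_renewal_integrand_def jump_targets indicator_def)
  then show ?thesis
    using fv_moment_renewal[of \<theta> p x t n] formula_renewal[OF assms(6), of x] assms
    by (auto intro: has_bochner_integral_eq)
qed

theorem corollary1:
  fixes \<theta>\<^sub>1 \<theta>\<^sub>2 \<theta> p x t :: real and n :: nat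
  assumes "\<theta>\<^sub>1 > 0" and "\<theta>\<^sub>2 > 0"
    and "\<theta> = \<theta>\<^sub>1 + \<theta>\<^sub>2" and "p = \<theta>\<^sub>1 / \<theta>"
    and "0 \<le> x" and "x \<le> 1" and "0 \<le> t"
  shows "(\<integral>\<omega>. (fv_xi \<theta>\<^sub>1 \<theta>\<^sub>2 x \<omega> t - p) ^ n \<partial>fv_space) =
      exp (- t * (1 + real n * \<theta> / 2)) * (x - p) ^ n
    + (2 / \<theta>) / (real n + 2 / \<theta>) * (p * (1 - p) ^ n + (-1) ^ n * (1 - p) * p ^ n)
        * (1 - exp (- t * (1 + real n * \<theta> / 2)))
    + (x - p) * exp (- \<theta> * t / 2) * (2 / \<theta>) / (real n - 1 + 2 / \<theta>)
        * ((1 - p) ^ n - (-1) ^ n * p ^ n)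
        * (1 - exp (- t * (1 + (real n - 1) * \<theta> / 2)))"
proof -
  have "0 < \<theta>" "0 \<le> p" "p \<le> 1"
    using assms(1-4) by auto
  have "(\<integral>\<omega>. (fv_xi \<theta>\<^sub>1 \<theta>\<^sub>2 x \<omega> t - p) ^ n \<partial>fv_space) = fv_moment \<theta> p n x t"
    unfolding fv_moment_eq_integral fv_xi_eq_fv_path using assms(3,4) by simp
  also have "\<dots> = fv_moment_formula \<theta> p n x t"
    using \<open>0 < \<theta>\<close> \<open>0 \<le> p\<close> \<open>p \<le> 1\<close> assms(5-7) by (rule fv_moment_eq_formula)
  finally show ?thesis
    unfolding fv_moment_formula_def .
qed

end
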